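(* Let $(\mathcal{S},\mathcal{A})$ be a finite directed acyclic graph with unique initial state $s_0$, unique sink state $s_f$, and terminating states $\mathcal{X}\subset\mathcal{S}$. For $i\in\{1,\dots,k\}$ let $p_{i,F}$ be a forward policy on this graph with partition function $Z_i>0$, reaching probability $u_i$, and terminating state distribution $p_i(x)=R_i(x)/Z_i$ where $R_i\ge0$. Let $\omega_1,\dots,\omega_k\ge0$, set $v_i=\omega_iZ_i/\sum_{j=1}^k\omega_jZ_j$, $u_M(s)=\sum_{i=1}^k v_iu_i(s)$, and $$p_{M,F}(s'\mid s)=\sum_{i=1}^k\frac{v_iu_i(s)}{u_M(s)}\,p_{i,F}(s'\mid s)\quad\text{for all } s\in\mathcal{S}\setminus\{s_f\}.$$ Let $p_M(s)$ (resp. $p_i(s)$) denote the probability that a trajectory sampled from $p_{M,F}$ (resp. $p_{i,F}$) terminates at state $s$. Then for all states $s$, $p_M(s)=\sum_{i=1}^k v_ip_i(s)$. Consequently, for $x\in\mathcal{X}$, $p_M(x)=\sum_{i=1}^k v_ip_i(x)\propto\sum_{i=1}^k\omega_iR_i(x)$.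
   Context: A forward policy $p_F$ assigns to each state $s\neq s_f$ a probability distribution $p_F(\cdot\mid s)$ over the children $s'$ of $s$ (states with $(s\to s')\in\mathcal{A}$); terminating states are those with an edge to $s_f$, and a trajectory terminates at $s$ if it takes the edge $s\to s_f$. Its reaching probability $u$ is defined by $u(s_0)=1$ and $u(s)=\sum_{s_*:(s_*\to s)\in\mathcal{A}}u(s_* )p_F(s\mid s_* )$ for $s\neq s_0$. The probability of terminating at $s$ equals $u(s)\,p_F(s_f\mid s)$. *)

theory Defs
  imports Complex_Main
begin

definition gfn_dag :: "'a set \<Rightarrow> ('a \<times> 'a) set \<Rightarrow> 'a \<Rightarrow> 'a \<Rightarrow> bool" where
  "gfn_dag S A s0 sf \<longleftrightarrow>
     finite S \<and> A \<subseteq> S \<times> S \<and> acyclic A \<and> s0 \<in> S \<and> sf \<in> S \<and> s0 \<noteq> sf \<and>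
     (\<forall>s\<in>S. (\<forall>t. (t, s) \<notin> A) \<longleftrightarrow> s = s0) \<and>
     (\<forall>s\<in>S. (\<forall>t. (s, t) \<notin> A) \<longleftrightarrow> s = sf)"

definition children :: "('a \<times> 'a) set \<Rightarrow> 'a \<Rightarrow> 'a set" where
  "children A s = {t. (s, t) \<in> A}"

definition parents :: "('a \<times> 'a) set \<Rightarrow> 'a \<Rightarrow> 'a set" where
  "parents A s = {t. (t, s) \<in> A}"

definition terminating_states :: "('a \<times> 'a) set \<Rightarrow> 'a \<Rightarrow> 'a set" where
  "terminating_states A sf = {s. (s, sf) \<in> A}"

definition forward_policy ::
  "'a set \<Rightarrow> ('a \<times> 'a) set \<Rightarrow> 'a \<Rightarrow> ('a \<Rightarrow> 'a \<Rightarrow> real) \<Rightarrow> bool" where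
  "forward_policy S A sf pF \<longleftrightarrow>
     (\<forall>s\<in>S - {sf}. (\<forall>t. 0 \<le> pF s t) \<and> (\<forall>t. t \<notin> children A s \<longrightarrow> pF s t = 0) \<and>
        (\<Sum>t\<in>children A s. pF s t) = 1)"

text \<open>u is the reaching probability of pF (defined by this recursion, which has a
  unique solution on a finite DAG).\<close>
definition reach_prob ::
  "'a set \<Rightarrow> ('a \<times> 'a) set \<Rightarrow> 'a \<Rightarrow> ('a \<Rightarrow> 'a \<Rightarrow> real) \<Rightarrow> ('a \<Rightarrow> real) \<Rightarrow> bool" where
  "reach_prob S A s0 pF u \<longleftrightarrow>
     u s0 = 1 \<and> (\<forall>s\<in>S - {s0}. u s = (\<Sum>t\<in>parents A s. u t * pF t s))"

definition term_prob :: "'a \<Rightarrow> ('a \<Rightarrow> 'a \<Rightarrow> real) \<Rightarrow> ('a \<Rightarrow> real) \<Rightarrow> 'a \<Rightarrow> real" where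
  "term_prob sf pF u s = u s * pF s sf"

end

theory Submission
  imports Defs
begin

text \<open>The mixture weights its components' flows \<open>u\<^sub>i(s) p\<^sub>i\<^sub>,\<^sub>F(s'|s)\<close> by \<open>v\<^sub>i\<close>, so the mixed
  reaching probability \<open>u\<^sub>M = \<Sum>\<^sub>i v\<^sub>i u\<^sub>i\<close> satisfies the reaching recursion of \<open>p\<^sub>M\<^sub>,\<^sub>F\<close>. On a
  finite DAG that recursion has a unique solution, so \<open>u\<^sub>M\<close> is the reaching probability of
  \<open>p\<^sub>M\<^sub>,\<^sub>F\<close>, and the terminating probabilities \<open>u\<^sub>M(s) p\<^sub>M\<^sub>,\<^sub>F(s\<^sub>f|s)\<close> mix in the same way.\<close>

definition mixture_reach :: "'i set \<Rightarrow> ('i \<Rightarrow> real) \<Rightarrow> ('i \<Rightarrow> 'a \<Rightarrow> real) \<Rightarrow> 'a \<Rightarrow> real" where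
  "mixture_reach I v u s = (\<Sum>i\<in>I. v i * u i s)"

definition mixture_policy ::
  "'i set \<Rightarrow> ('i \<Rightarrow> real) \<Rightarrow> ('i \<Rightarrow> 'a \<Rightarrow> real) \<Rightarrow> ('i \<Rightarrow> 'a \<Rightarrow> 'a \<Rightarrow> real) \<Rightarrow> 'a \<Rightarrow> 'a \<Rightarrow> real" where
  "mixture_policy I v u pF s s' = (\<Sum>i\<in>I. v i * u i s / mixture_reach I v u s * pF i s s')"

lemma gfn_dag_wf:
  assumes "gfn_dag S A s0 sf"
  shows "wf A"
proof (rule finite_acyclic_wf)
  have "A \<subseteq> S \<times> S" "finite S" using assms unfolding gfn_dag_def by auto
  then show "finite A" by (meson finite_SigmaI finite_subset)
  show "acyclic A" using assms unfolding gfn_dag_def by auto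
qed

lemma gfn_dag_parent:
  assumes "gfn_dag S A s0 sf" and "t \<in> parents A s"
  shows "(t, s) \<in> A" and "t \<in> S - {sf}"
  using assms unfolding gfn_dag_def parents_def by blast+

lemma reach_prob_nonneg:
  assumes G: "gfn_dag S A s0 sf" and pol: "forward_policy S A sf p"
    and reach: "reach_prob S A s0 p u" and "s \<in> S"
  shows "0 \<le> u s"
  using gfn_dag_wf[OF G] \<open>s \<in> S\<close>
proof (induction s rule: wf_induct_rule)
  case (less s)
  show ?case
  proof (cases "s = s0")
    case True
    then show ?thesis using reach unfolding reach_prob_def by simp
  next
    case False
    then have "u s = (\<Sum>t\<in>parents A s. u t * p t s)"
      using reach less.prems unfolding reach_prob_def by simp
    also have "\<dots> \<ge> 0"
    proof (intro sum_nonneg mult_nonneg_nonneg)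
      fix t assume t: "t \<in> parents A s"
      show "0 \<le> u t" using less.IH gfn_dag_parent[OF G t] by blast
      show "0 \<le> p t s" using pol gfn_dag_parent(2)[OF G t] unfolding forward_policy_def by blast
    qed
    finally show ?thesis .
  qed
qed

lemma reach_prob_unique:
  assumes G: "gfn_dag S A s0 sf"
    and u: "reach_prob S A s0 p u" and w: "reach_prob S A s0 p w" and "s \<in> S"
  shows "u s = w s"
  using gfn_dag_wf[OF G] \<open>s \<in> S\<close>
proof (induction s rule: wf_induct_rule)
  case (less s)
  show ?case
  proof (cases "s = s0")
    case True
    then show ?thesis using u w unfolding reach_prob_def by simp
  next
    case False
    have "u s = (\<Sum>t\<in>parents A s. u t * p t s)"
      using u False less.prems unfolding reach_prob_def by simp
    also have "\<dots> = (\<Sum>t\<in>parents A s. w t * p t s)"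
      using less.IH gfn_dag_parent[OF G] by (intro sum.cong) auto
    also have "\<dots> = w s"
      using w False less.prems unfolding reach_prob_def by simp
    finally show ?thesis .
  qed
qed

text \<open>When all weights vanish, the junk value \<open>x / 0 = 0\<close> makes both sides \<open>0\<close>.\<close>
lemma sum_mult_weighted_average:
  fixes a p :: "'i \<Rightarrow> real"
  assumes "finite I" and "\<forall>i\<in>I. 0 \<le> a i"
  shows "sum a I * (\<Sum>i\<in>I. a i / sum a I * p i) = (\<Sum>i\<in>I. a i * p i)"
proof (cases "sum a I = 0")
  case True
  then have "\<forall>i\<in>I. a i = 0" using assms sum_nonneg_eq_0_iff by blast
  then show ?thesis by simp
next
  case False
  then show ?thesis by (simp add: sum_distrib_left)
qed

lemma mixture_flow:
  assumes "finite I" and "\<forall>i\<in>I. 0 \<le> v i" and "\<forall>i\<in>I. 0 \<le> u i s"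
  shows "mixture_reach I v u s * mixture_policy I v u pF s t = (\<Sum>i\<in>I. v i * u i s * pF i s t)"
  unfolding mixture_policy_def mixture_reach_def
  using sum_mult_weighted_average[of I "\<lambda>i. v i * u i s" "\<lambda>i. pF i s t"] assms by simp

lemma reach_prob_mixture:
  assumes I: "finite I" and G: "gfn_dag S A s0 sf"
    and pol: "\<forall>i\<in>I. forward_policy S A sf (pF i)"
    and reach: "\<forall>i\<in>I. reach_prob S A s0 (pF i) (u i)"
    and v_nonneg: "\<forall>i\<in>I. 0 \<le> v i" and v_sum: "sum v I = 1"
  shows "reach_prob S A s0 (mixture_policy I v u pF) (mixture_reach I v u)"
  unfolding reach_prob_def
proof (intro conjI ballI)
  show "mixture_reach I v u s0 = 1"
    using reach v_sum unfolding mixture_reach_def reach_prob_def by simp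
next
  fix s assume s: "s \<in> S - {s0}"
  have "mixture_reach I v u s = (\<Sum>i\<in>I. v i * (\<Sum>t\<in>parents A s. u i t * pF i t s))"
    unfolding mixture_reach_def using reach s unfolding reach_prob_def by simp
  also have "\<dots> = (\<Sum>t\<in>parents A s. \<Sum>i\<in>I. v i * u i t * pF i t s)"
    by (subst sum.swap) (simp add: sum_distrib_left mult.assoc)
  also have "\<dots> = (\<Sum>t\<in>parents A s. mixture_reach I v u t * mixture_policy I v u pF t s)"
  proof (intro sum.cong refl)
    fix t assume "t \<in> parents A s"
    then have "t \<in> S" using gfn_dag_parent(2)[OF G] by blast
    then have "\<forall>i\<in>I. 0 \<le> u i t"
      using pol reach by (auto intro: reach_prob_nonneg[OF G])
    then show "(\<Sum>i\<in>I. v i * u i t * pF i t s) = mixture_reach I v u t * mixture_policy I v u pF t s"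
      by (rule mixture_flow[OF I v_nonneg, symmetric])
  qed
  finally show "mixture_reach I v u s
      = (\<Sum>t\<in>parents A s. mixture_reach I v u t * mixture_policy I v u pF t s)" .
qed

lemma term_prob_mixture:
  assumes I: "finite I" and G: "gfn_dag S A s0 sf"
    and pol: "\<forall>i\<in>I. forward_policy S A sf (pF i)"
    and reach: "\<forall>i\<in>I. reach_prob S A s0 (pF i) (u i)"
    and v_nonneg: "\<forall>i\<in>I. 0 \<le> v i" and v_sum: "sum v I = 1"
    and reachM: "reach_prob S A s0 (mixture_policy I v u pF) uM" and s: "s \<in> S"
  shows "term_prob sf (mixture_policy I v u pF) uM s = (\<Sum>i\<in>I. v i * term_prob sf (pF i) (u i) s)"
proof -
  have "uM s = mixture_reach I v u s"
    using reach_prob_unique[OF G reachM reach_prob_mixture[OF assms(1-6)] s] .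
  moreover have "\<forall>i\<in>I. 0 \<le> u i s"
    using pol reach s by (auto intro: reach_prob_nonneg[OF G])
  ultimately show ?thesis
    unfolding term_prob_def by (simp add: mixture_flow[OF I v_nonneg] mult.assoc)
qed

theorem theoremA4:
  fixes S :: "'a set" and A :: "('a \<times> 'a) set" and s0 sf :: 'a and k :: nat
    and pF :: "nat \<Rightarrow> 'a \<Rightarrow> 'a \<Rightarrow> real" and u :: "nat \<Rightarrow> 'a \<Rightarrow> real"
    and R :: "nat \<Rightarrow> 'a \<Rightarrow> real" and Z :: "nat \<Rightarrow> real" and \<omega> :: "nat \<Rightarrow> real"
    and v :: "nat \<Rightarrow> real" and uM :: "'a \<Rightarrow> real" and pMF :: "'a \<Rightarrow> 'a \<Rightarrow> real"
    and uM' :: "'a \<Rightarrow> real"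
  assumes G: "gfn_dag S A s0 sf"
    and pol: "\<forall>i\<in>{1..k}. forward_policy S A sf (pF i)"
    and reach: "\<forall>i\<in>{1..k}. reach_prob S A s0 (pF i) (u i)"
    and Zpos: "\<forall>i\<in>{1..k}. Z i > 0"
    and Rnn: "\<forall>i\<in>{1..k}. \<forall>x\<in>terminating_states A sf. R i x \<ge> 0"
    and termp: "\<forall>i\<in>{1..k}. \<forall>x\<in>terminating_states A sf. term_prob sf (pF i) (u i) x = R i x / Z i"
    and wnn: "\<forall>i\<in>{1..k}. \<omega> i \<ge> 0"
    and v_def: "v = (\<lambda>i. \<omega> i * Z i / (\<Sum>j=1..k. \<omega> j * Z j))"
    and uM_def: "uM = (\<lambda>s. \<Sum>i=1..k. v i * u i s)"
    and pMF_def: "pMF = (\<lambda>s s'. \<Sum>i=1..k. v i * u i s / uM s * pF i s s')"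
    and reachM: "reach_prob S A s0 pMF uM'"
  shows "(\<forall>s\<in>S. term_prob sf pMF uM' s = (\<Sum>i=1..k. v i * term_prob sf (pF i) (u i) s))
       \<and> (\<forall>x\<in>terminating_states A sf.
            term_prob sf pMF uM' x = (\<Sum>i=1..k. \<omega> i * R i x) / (\<Sum>j=1..k. \<omega> j * Z j))"
proof -
  define D where "D = (\<Sum>j=1..k. \<omega> j * Z j)"
  have pMF: "pMF = mixture_policy {1..k} v u pF"
    unfolding pMF_def uM_def mixture_policy_def mixture_reach_def ..
  have mix: "\<forall>s\<in>S. term_prob sf pMF uM' s = (\<Sum>i=1..k. v i * term_prob sf (pF i) (u i) s)"
  proof (cases "D = 0")
    case True
    \<comment> \<open>Then \<open>v = 0\<close>, so \<open>uM\<close> is no reaching probability, but \<open>pMF = 0\<close>.\<close>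
    then show ?thesis unfolding pMF_def v_def D_def term_prob_def by simp
  next
    case False
    have "\<forall>i\<in>{1..k}. 0 \<le> v i"
      unfolding v_def using wnn Zpos
      by (intro ballI divide_nonneg_nonneg mult_nonneg_nonneg sum_nonneg) (auto simp: less_imp_le)
    moreover have "sum v {1..k} = 1"
      using False unfolding v_def D_def by (simp add: sum_divide_distrib[symmetric])
    ultimately show ?thesis
      using term_prob_mixture[OF _ G pol reach] reachM unfolding pMF by simp
  qed
  moreover have "term_prob sf pMF uM' x = (\<Sum>i=1..k. \<omega> i * R i x) / D"
    if x: "x \<in> terminating_states A sf" for x
  proof -
    have "x \<in> S" using x G unfolding terminating_states_def gfn_dag_def by auto
    then have "term_prob sf pMF uM' x = (\<Sum>i=1..k. v i * (R i x / Z i))"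
      using mix termp x by simp
    also have "\<dots> = (\<Sum>i=1..k. \<omega> i * R i x / D)"
      unfolding v_def D_def using Zpos by (intro sum.cong) (auto simp: less_imp_neq[symmetric])
    finally show ?thesis by (simp add: sum_divide_distrib)
  qed
  ultimately show ?thesis unfolding D_def by blast
qed

end
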